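(* For every sequence $s$, $$\mathsf{Seq}\vdash\forall x\,\Big[x\sqsubseteq\overline{s}\;\leftrightarrow\;\bigvee_{t\in I(s)}x=\overline{t}\Big],$$ where $I(s)$ is the set of all initial segments of $s$.
   Context: $\mathcal{L}=\{e,\vdash,\circ\}$ with $e$ a constant and $\vdash$ (infix), $\circ$ binary function symbols. $\mathsf{Seq}$ is the $\mathcal{L}$-theory with axioms: ($\mathsf{Seq}_1$) $\forall xy[x\vdash y\neq e]$; ($\mathsf{Seq}_2$) $\forall x_1x_2y_1y_2[x_1\vdash x_2=y_1\vdash y_2\rightarrow(x_1=y_1\wedge x_2=y_2)]$; ($\mathsf{Seq}_3$) $\forall x[x\circ e=x]$; ($\mathsf{Seq}_4$) $\forall xyz[x\circ(y\vdash z)=(x\circ y)\vdash z]$; ($\mathsf{Seq}_5$) $\forall x[x=e\vee\exists yz[x=y\vdash z]]$. Sequences: $()$ is a sequence, and for $n>0$, if $s_1,\ldots,s_n$ are sequences then $(s_1,\ldots,s_n)$ is a sequence; the initial segments of $(s_1,\ldots,s_n)$ are $()$ and $(s_1,\ldots,s_k)$ for $1\le k\le n$. The sequeral $\overline{s}$ is the term with $\overline{()}=e$ and $\overline{(s_1,\ldots,s_n)}=(\ldots((e\vdash\overline{s_1})\vdash\overline{s_2})\ldots)\vdash\overline{s_n}$. $x\sqsubseteq t$ abbreviates $\exists y[x\circ y=t]$. *)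

theory Defs
  imports Main
begin

text \<open>Hereditarily finite sequences: () is Seq [], (s1,...,sn) is Seq [s1,...,sn].\<close>
datatype sequence = Seq "sequence list"

fun initial_segments :: "sequence \<Rightarrow> sequence set" where
  "initial_segments (Seq xs) = {Seq (take k xs) | k. k \<le> length xs}"

text \<open>A structure (carrier type 'a, constant e, binary operations pr (for |-) and co (for o))
  is a model of the theory Seq iff it satisfies axioms Seq1--Seq5.\<close>
definition seq_model :: "'a \<Rightarrow> ('a \<Rightarrow> 'a \<Rightarrow> 'a) \<Rightarrow> ('a \<Rightarrow> 'a \<Rightarrow> 'a) \<Rightarrow> bool" where
  "seq_model e pr co \<longleftrightarrow>
     (\<forall>x y. pr x y \<noteq> e) \<and>
     (\<forall>x1 x2 y1 y2. pr x1 x2 = pr y1 y2 \<longrightarrow> x1 = y1 \<and> x2 = y2) \<and>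
     (\<forall>x. co x e = x) \<and>
     (\<forall>x y z. co x (pr y z) = pr (co x y) z) \<and>
     (\<forall>x. x = e \<or> (\<exists>y z. x = pr y z))"

primrec sequeral :: "'a \<Rightarrow> ('a \<Rightarrow> 'a \<Rightarrow> 'a) \<Rightarrow> sequence \<Rightarrow> 'a" where
  "sequeral e pr (Seq xs) = foldl pr e (map (sequeral e pr) xs)"

end

theory Submission
  imports Defs
begin

text \<open>The sequeral of (s1,...,sn) is the left fold of \<open>\<turnstile>\<close> over the sequerals of the si, so it
  suffices to show that the \<open>\<sqsubseteq>\<close>-predecessors of \<open>foldl \<turnstile> e vs\<close> are exactly the folds over
  the prefixes of vs. This goes by induction on vs from the right: by Seq5 a witness y of
  \<open>x \<circ> y = (foldl \<turnstile> e vs) \<turnstile> v\<close> is either e, giving x itself, or \<open>y' \<turnstile> v\<close>, and then Seq4 and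
  Seq2 reduce the equation to \<open>x \<circ> y' = foldl \<turnstile> e vs\<close>.\<close>

context
  fixes e :: 'a and pr co :: "'a \<Rightarrow> 'a \<Rightarrow> 'a"
  assumes model: "seq_model e pr co"
begin

lemma pr_neq_e: "pr x y \<noteq> e"
  using model by (simp add: seq_model_def)

lemma pr_inject: "pr x1 x2 = pr y1 y2 \<longleftrightarrow> x1 = y1 \<and> x2 = y2"
  using model unfolding seq_model_def by metis

lemma co_e: "co x e = x"
  using model by (simp add: seq_model_def)

lemma co_pr: "co x (pr y z) = pr (co x y) z"
  using model by (simp add: seq_model_def)

lemma e_or_pr_cases:
  obtains "x = e" | y z where "x = pr y z"
  using model unfolding seq_model_def by metis

lemma co_eq_e_iff: "co x y = e \<longleftrightarrow> x = e \<and> y = e"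
  by (cases y rule: e_or_pr_cases) (auto simp: co_e co_pr pr_neq_e)

lemma co_eq_pr_iff:
  "co x y = pr u v \<longleftrightarrow> (y = e \<and> x = pr u v) \<or> (\<exists>y'. y = pr y' v \<and> co x y' = u)"
  by (cases y rule: e_or_pr_cases) (auto simp: co_e co_pr pr_inject pr_neq_e pr_neq_e[symmetric])

lemma co_prefix_foldl_iff:
  "(\<exists>y. co x y = foldl pr e vs) \<longleftrightarrow> (\<exists>k\<le>length vs. x = foldl pr e (take k vs))"
proof (induction vs arbitrary: x rule: rev_induct)
  case Nil
  show ?case by (auto simp: co_eq_e_iff)
next
  case (snoc v vs)
  have "(\<exists>y. co x y = foldl pr e (vs @ [v]))
        \<longleftrightarrow> x = foldl pr e (vs @ [v]) \<or> (\<exists>y'. co x y' = foldl pr e vs)"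
    by (auto simp: co_eq_pr_iff)
  also have "\<dots> \<longleftrightarrow> x = foldl pr e (vs @ [v]) \<or> (\<exists>k\<le>length vs. x = foldl pr e (take k vs))"
    using snoc.IH by simp
  also have "\<dots> \<longleftrightarrow> (\<exists>k\<le>length (vs @ [v]). x = foldl pr e (take k (vs @ [v])))"
    by (auto simp: le_Suc_eq intro: exI[of _ "Suc (length vs)"])
  finally show ?case .
qed

end

theorem lemma2:
  fixes e :: 'a and pr co :: "'a \<Rightarrow> 'a \<Rightarrow> 'a" and s :: sequence
  assumes "seq_model e pr co"
  shows "\<forall>x. (\<exists>y. co x y = sequeral e pr s) \<longleftrightarrow>
             (\<exists>t \<in> initial_segments s. x = sequeral e pr t)"
proof (cases s)
  case (Seq xs)
  have "(\<exists>t \<in> initial_segments s. x = sequeral e pr t)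
        \<longleftrightarrow> (\<exists>k\<le>length xs. x = foldl pr e (take k (map (sequeral e pr) xs)))" for x
    using Seq by (auto simp: take_map)
  then show ?thesis
    using co_prefix_foldl_iff[OF assms, of _ "map (sequeral e pr) xs"] Seq by simp
qed

end
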